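(* Let $n\ge k\ge 1$ be integers, $i\in\{1,\ldots,n\}$, let $H\sim\text{Hyp}(n,i,k)$, and fix an integer $m\in \{0,1,\ldots,\min\{i,k\}\}$. Then \[ \mathbb{P}(H \ge m) = \frac{\binom{k}{m}\cdot \binom{i}{m}}{\binom{n}{m}} \cdot \mathbb{E}\left(\frac{1}{\binom{Z_m+m}{m}} \right), \] where $Z_m\sim\text{Hyp}(n-m,i-m,k-m)$.
   Context: $\text{Hyp}(N,a,b)$ (for integers $0\le a\le N$, $0\le b\le N$) denotes the hypergeometric distribution: the number of black marbles in a sample without replacement of size $b$ from an urn with $a$ black and $N-a$ white marbles, i.e. $\mathbb{P}(Z=j)=\binom{a}{j}\binom{N-a}{b-j}/\binom{N}{b}$ for $j\in\{\max\{0,b-(N-a)\},\ldots,\min\{a,b\}\}$ (in degenerate cases with $a=0$ or $b=0$ this is the point mass at $0$). *)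

theory Defs
  imports "HOL-Probability.Probability"
begin

text \<open>Hypergeometric distribution Hyp(N,a,b): number of black marbles in a uniform
  sample without replacement of size b from an urn of N marbles, the marbles
  0,...,a-1 being black and a,...,N-1 white. Intended for a \<le> N, b \<le> N.\<close>
definition hyp_pmf :: "nat \<Rightarrow> nat \<Rightarrow> nat \<Rightarrow> nat pmf" where
  "hyp_pmf N a b =
     map_pmf (\<lambda>S. card (S \<inter> {..<a})) (pmf_of_set {S. S \<subseteq> {..<N} \<and> card S = b})"

end

theory Submission
  imports Defs
begin

text \<open>Counting samples by their intersection with the black marbles gives
  P(H = j) = binom(i,j) binom(n-i,k-j) / binom(n,k). Trinomial revision
  binom(i,m) binom(i-m,z) = binom(i,z+m) binom(z+m,m), together with its instance for n and k
  in the denominator, turns P(H = z + m) into binom(k,m) binom(i,m) / binom(n,m) times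
  P(Z = z) / binom(z+m,m); summing over z \<ge> 0 gives the identity.\<close>

lemma card_subsets_Int_eq:
  assumes "finite A" and "B \<subseteq> A" and "j \<le> b"
  shows "card {S. S \<subseteq> A \<and> card S = b \<and> card (S \<inter> B) = j}
           = (card B choose j) * (card (A - B) choose (b - j))"
proof -
  let ?X = "{X. X \<subseteq> B \<and> card X = j}"
  let ?Y = "{Y. Y \<subseteq> A - B \<and> card Y = b - j}"
  let ?S = "{S. S \<subseteq> A \<and> card S = b \<and> card (S \<inter> B) = j}"
  have fin_B: "finite B" and fin_AB: "finite (A - B)"
    using assms(1,2) by (auto intro: rev_finite_subset)
  have "bij_betw (\<lambda>(X, Y). X \<union> Y) (?X \<times> ?Y) ?S"
  proof (rule bij_betwI[where g = "\<lambda>S. (S \<inter> B, S - B)"])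
    show "(\<lambda>(X, Y). X \<union> Y) \<in> ?X \<times> ?Y \<rightarrow> ?S"
    proof
      fix XY assume "XY \<in> ?X \<times> ?Y"
      then obtain X Y where XY: "XY = (X, Y)"
        and X: "X \<subseteq> B" "card X = j" and Y: "Y \<subseteq> A - B" "card Y = b - j"
        by blast
      have "card (X \<union> Y) = card X + card Y"
        using X(1) Y(1) rev_finite_subset[OF fin_B X(1)] rev_finite_subset[OF fin_AB Y(1)]
        by (intro card_Un_disjoint) auto
      moreover have "(X \<union> Y) \<inter> B = X"
        using X(1) Y(1) by blast
      ultimately show "(\<lambda>(X, Y). X \<union> Y) XY \<in> ?S"
        using XY X Y assms(2,3) by auto
    qed
    show "(\<lambda>S. (S \<inter> B, S - B)) \<in> ?S \<rightarrow> ?X \<times> ?Y"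
    proof
      fix S assume S: "S \<in> ?S"
      have "card (S - B) = card S - card (S \<inter> B)"
        using S rev_finite_subset[OF assms(1)] by (intro card_Diff_subset_Int) auto
      then show "(\<lambda>S. (S \<inter> B, S - B)) S \<in> ?X \<times> ?Y"
        using S by auto
    qed
    show "(\<lambda>S. (S \<inter> B, S - B)) ((\<lambda>(X, Y). X \<union> Y) XY) = XY" if "XY \<in> ?X \<times> ?Y" for XY
      using that by blast
    show "(\<lambda>(X, Y). X \<union> Y) ((\<lambda>S. (S \<inter> B, S - B)) S) = S" for S
      by blast
  qed
  then have "card ?S = card ?X * card ?Y"
    by (simp add: bij_betw_same_card[symmetric] card_cartesian_product)
  also have "\<dots> = (card B choose j) * (card (A - B) choose (b - j))"
    by (simp add: n_subsets fin_B fin_AB)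
  finally show ?thesis .
qed

lemma card_lessThan_subsets: "card {S. S \<subseteq> {..<N} \<and> card S = b} = N choose b"
  by (simp add: n_subsets)

lemma set_pmf_hyp_pmf:
  assumes "b \<le> N"
  shows "set_pmf (hyp_pmf N a b) \<subseteq> {..b}"
proof -
  let ?F = "{S. S \<subseteq> {..<N} \<and> card S = b}"
  have "?F \<noteq> {}" "finite ?F"
    using assms card_gt_0_iff[of ?F] by (simp_all add: card_lessThan_subsets)
  then have "set_pmf (hyp_pmf N a b) = (\<lambda>S. card (S \<inter> {..<a})) ` ?F"
    by (simp add: hyp_pmf_def)
  moreover have "card (S \<inter> {..<a}) \<le> b" if "S \<in> ?F" for S
    using that card_mono[of S "S \<inter> {..<a}"] finite_subset[of S "{..<N}"] by blast
  ultimately show ?thesis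
    by auto
qed

lemma pmf_hyp_pmf:
  assumes "a \<le> N" and "b \<le> N" and "j \<le> b"
  shows "pmf (hyp_pmf N a b) j = real (a choose j) * real ((N - a) choose (b - j)) / real (N choose b)"
proof -
  let ?F = "{S. S \<subseteq> {..<N} \<and> card S = b}"
  have F: "?F \<noteq> {}" "finite ?F"
    using assms card_gt_0_iff[of ?F] by (simp_all add: card_lessThan_subsets)
  have "pmf (hyp_pmf N a b) j = card (?F \<inter> {S. card (S \<inter> {..<a}) = j}) / card ?F"
    unfolding hyp_pmf_def pmf_map using measure_pmf_of_set[OF F] by (simp add: vimage_def)
  also have "?F \<inter> {S. card (S \<inter> {..<a}) = j} = {S. S \<subseteq> {..<N} \<and> card S = b \<and> card (S \<inter> {..<a}) = j}"
    by auto
  finally show ?thesis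
    using assms card_subsets_Int_eq[of "{..<N}" "{..<a}" j b]
    by (simp add: card_lessThan_subsets)
qed

lemma choose_mult_add:
  fixes i m z :: nat
  assumes "m \<le> i"
  shows "(i choose m) * ((i - m) choose z) = (i choose (z + m)) * ((z + m) choose m)"
proof (cases "z + m \<le> i")
  case True
  then show ?thesis
    using choose_mult[of m "z + m" i] by (simp add: mult.commute)
next
  case False
  then show ?thesis
    using assms by (simp add: binomial_eq_0)
qed

lemma pmf_hyp_pmf_add:
  assumes "k \<le> n" and "i \<le> n" and "m \<le> i" and "m \<le> k"
  shows "pmf (hyp_pmf n i k) (z + m) =
    real (k choose m) * real (i choose m) / real (n choose m) *
    (1 / real ((z + m) choose m) * pmf (hyp_pmf (n - m) (i - m) (k - m)) z)"
proof (cases "z \<le> k - m")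
  case True
  define white where "white = real ((n - i) choose (k - (z + m)))"
  have "n - m - (i - m) = n - i" "k - m - z = k - (z + m)"
    using assms True by auto
  then have pmf_shifted: "pmf (hyp_pmf (n - m) (i - m) (k - m)) z =
      real ((i - m) choose z) * white / real ((n - m) choose (k - m))"
    using assms True pmf_hyp_pmf[of "i - m" "n - m" "k - m" z] by (simp add: white_def)
  have revision_i: "real (i choose m) * real ((i - m) choose z) = real (i choose (z + m)) * real ((z + m) choose m)"
    using choose_mult_add[OF assms(3)] by (metis of_nat_mult)
  have revision_n: "real (n choose m) * real ((n - m) choose (k - m)) = real (n choose k) * real (k choose m)"
    using choose_mult[of m k n] assms by (metis of_nat_mult)
  have "pmf (hyp_pmf n i k) (z + m) = real (i choose (z + m)) * white / real (n choose k)"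
    using assms True pmf_hyp_pmf[of i n k "z + m"] by (simp add: white_def)
  also have "\<dots> = real (k choose m) * real ((z + m) choose m) * (real (i choose (z + m)) * white) /
      (real (k choose m) * real ((z + m) choose m) * real (n choose k))"
    using assms by simp
  also have "\<dots> = real (k choose m) * (real (i choose m) * real ((i - m) choose z)) * white /
      (real ((z + m) choose m) * (real (n choose m) * real ((n - m) choose (k - m))))"
    unfolding revision_i revision_n by (simp only: ac_simps)
  also have "\<dots> = real (k choose m) * real (i choose m) / real (n choose m) *
      (1 / real ((z + m) choose m) * (real ((i - m) choose z) * white / real ((n - m) choose (k - m))))"
    by (simp add: divide_inverse ac_simps)
  finally show ?thesis
    unfolding pmf_shifted .
next
  case False
  then have "z + m \<notin> set_pmf (hyp_pmf n i k)" "z \<notin> set_pmf (hyp_pmf (n - m) (i - m) (k - m))"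
    using assms set_pmf_hyp_pmf[of k n i] set_pmf_hyp_pmf[of "k - m" "n - m" "i - m"] by force+
  then show ?thesis
    by (simp add: set_pmf_iff)
qed

theorem lemma3:
  fixes n k i m :: nat
  assumes "1 \<le> k" and "k \<le> n"
    and "1 \<le> i" and "i \<le> n"
    and "m \<le> min i k"
  shows "measure_pmf.prob (hyp_pmf n i k) {m..} =
    real (k choose m) * real (i choose m) / real (n choose m) *
    measure_pmf.expectation (hyp_pmf (n - m) (i - m) (k - m))
      (\<lambda>z. 1 / real ((z + m) choose m))"
proof -
  let ?H = "hyp_pmf n i k" and ?Z = "hyp_pmf (n - m) (i - m) (k - m)"
  let ?c = "real (k choose m) * real (i choose m) / real (n choose m)"
  have "k - m \<le> n - m"
    using assms(2) by (rule diff_le_mono)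
  then have support_Z: "set_pmf ?Z \<subseteq> {0..k - m}"
    using set_pmf_hyp_pmf[of "k - m" "n - m" "i - m"] by (simp add: atLeast0AtMost)
  have "{m..} \<inter> set_pmf ?H = {m..k} \<inter> set_pmf ?H"
    using set_pmf_hyp_pmf[of k n i] assms(2) by auto
  then have "measure_pmf.prob ?H {m..} = measure_pmf.prob ?H {m..k}"
    by (metis measure_Int_set_pmf)
  also have "\<dots> = sum (pmf ?H) {0 + m..(k - m) + m}"
    using assms by (simp add: measure_measure_pmf_finite)
  also have "\<dots> = (\<Sum>z = 0..k - m. pmf ?H (z + m))"
    by (rule sum.shift_bounds_cl_nat_ivl)
  also have "\<dots> = (\<Sum>z = 0..k - m. ?c * (1 / real ((z + m) choose m) * pmf ?Z z))"
    using assms by (intro sum.cong refl pmf_hyp_pmf_add) auto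
  also have "\<dots> = ?c * (\<Sum>z = 0..k - m. 1 / real ((z + m) choose m) * pmf ?Z z)"
    by (simp add: sum_distrib_left)
  also have "(\<Sum>z = 0..k - m. 1 / real ((z + m) choose m) * pmf ?Z z) =
      measure_pmf.expectation ?Z (\<lambda>z. 1 / real ((z + m) choose m))"
    using support_Z by (intro integral_measure_pmf_real[symmetric]) auto
  finally show ?thesis .
qed

end
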